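(* Let $P$ be a rectangular box (brick) in $\mathbb{R}^3$ of volume $1$, all of whose edge lengths are at least $\frac{1}{\sqrt{2}}$. Let $e_1,e_2,e_3$ be three pairwise skew edges of $P$, and let $A\in e_1$, $B\in e_2$, $C\in e_3$ be the vertices of a triangle $ABC$. Then at least one side of the triangle $ABC$ has length at most $\sqrt{2}$.
   Context: A brick is a rectangular parallelepiped (box with pairwise orthogonal edge directions). Edges of the brick are its twelve closed edge segments. Three edges are pairwise skew if no two of them are parallel and no two intersect; in a brick such a triple consists of one edge from each of the three edge directions. "The vertices of a triangle lie on the skew edges of the brick" means each vertex lies on a different edge of such a triple. *)

theory Defs
  imports "HOL-Analysis.Analysis"
begin

definition brick_data ::
  "real^3 \<Rightarrow> (nat \<Rightarrow> real^3) \<Rightarrow> (nat \<Rightarrow> real) \<Rightarrow> bool" where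
  "brick_data p u a \<longleftrightarrow>
     (\<forall>i\<in>{1,2,3}. \<forall>j\<in>{1,2,3}. u i \<bullet> u j = (if i = j then 1 else 0)) \<and>
     (\<forall>i\<in>{1,2,3}. a i > 0)"

definition brick_point ::
  "real^3 \<Rightarrow> (nat \<Rightarrow> real^3) \<Rightarrow> (nat \<Rightarrow> real) \<Rightarrow> (nat \<Rightarrow> real) \<Rightarrow> real^3" where
  "brick_point p u a t = p + (\<Sum>i\<in>{1,2,3}. (t i * a i) *\<^sub>R u i)"

definition brick :: "real^3 \<Rightarrow> (nat \<Rightarrow> real^3) \<Rightarrow> (nat \<Rightarrow> real) \<Rightarrow> (real^3) set" where
  "brick p u a = {brick_point p u a t | t. \<forall>i\<in>{1,2,3}. 0 \<le> t i \<and> t i \<le> 1}"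

text \<open>The (closed) edges of the brick parallel to direction i: the coordinate t_i
ranges over [0,1], the other two coordinates are fixed to 0 or 1 (given by
the choice function c, whose value at i is irrelevant).\<close>

definition brick_edge ::
  "real^3 \<Rightarrow> (nat \<Rightarrow> real^3) \<Rightarrow> (nat \<Rightarrow> real) \<Rightarrow> nat \<Rightarrow> (nat \<Rightarrow> real) \<Rightarrow> (real^3) set" where
  "brick_edge p u a i c =
     {brick_point p u a t | t. 0 \<le> t i \<and> t i \<le> 1 \<and> (\<forall>j\<in>{1,2,3}-{i}. t j = c j)}"

definition is_brick_edge ::
  "real^3 \<Rightarrow> (nat \<Rightarrow> real^3) \<Rightarrow> (nat \<Rightarrow> real) \<Rightarrow> nat \<Rightarrow> (real^3) set \<Rightarrow> bool" where
  "is_brick_edge p u a i E \<longleftrightarrow>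
     (\<exists>c. (\<forall>j\<in>{1,2,3}-{i}. c j = 0 \<or> c j = 1) \<and> E = brick_edge p u a i c)"

text \<open>Three edges are pairwise skew: no two parallel (here: they are edges in the three
different directions 1,2,3) and no two intersect.\<close>

definition skew_edge_triple ::
  "real^3 \<Rightarrow> (nat \<Rightarrow> real^3) \<Rightarrow> (nat \<Rightarrow> real) \<Rightarrow> (real^3) set \<Rightarrow> (real^3) set \<Rightarrow> (real^3) set \<Rightarrow> bool" where
  "skew_edge_triple p u a E1 E2 E3 \<longleftrightarrow>
     is_brick_edge p u a 1 E1 \<and> is_brick_edge p u a 2 E2 \<and> is_brick_edge p u a 3 E3 \<and>
     E1 \<inter> E2 = {} \<and> E2 \<inter> E3 = {} \<and> E1 \<inter> E3 = {}"

end

theory Submission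
  imports Defs
begin

text \<open>Write \<open>\<alpha>, \<beta>, \<gamma>\<close> for the squared edge lengths of the brick and \<open>x, y, z \<in> [0, 1]\<close> for the
positions of \<open>A, B, C\<close> along their edges, measured from suitable ends. The squared sides of the
triangle are then
  \<open>\<alpha> x\<^sup>2 + \<beta> (1 - y)\<^sup>2 + \<gamma>\<close>,  \<open>\<alpha> + \<beta> y\<^sup>2 + \<gamma> z\<^sup>2\<close>,  \<open>\<alpha> (1 - x)\<^sup>2 + \<beta> + \<gamma> (1 - z)\<^sup>2\<close>,
where \<open>\<alpha>, \<beta>, \<gamma> \<ge> 1/2\<close> and \<open>\<alpha> \<beta> \<gamma> = 1\<close>. One of them is at most 2 because some nonnegative,
nonzero combination of the three differences \<open>side\<^sup>2 - 2\<close> is nonpositive. Up to relabelling the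
edge directions and reflecting positions we may assume \<open>\<alpha> \<ge> \<beta> \<ge> \<gamma>\<close>. The weights are
\<open>(1 - x, 0, x)\<close> if \<open>\<alpha> \<ge> 2\<close>, and \<open>(1 - x, x, x)\<close> or \<open>(1 - x, 1 - x, x)\<close> if
\<open>G = \<alpha>\<^sup>2 + 1 + \<alpha> \<beta> + \<alpha> \<gamma> - 4 \<alpha> \<le> 0\<close>. What remains is a thin region around the extremal brick
\<open>\<alpha> = \<beta> = \<surd>2, \<gamma> = 1/2\<close>; there the weights \<open>((1 - x)(1 + h), (1 - x)(1 - h), x (1 + h))\<close>
with \<open>h = 2 (2 - \<alpha> - \<gamma>)\<close> leave a quadratic in \<open>x\<close> with nonpositive discriminant. After clearing
denominators the discriminant is a polynomial on an explicit small box, whose sign is certified by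
bounding every monomial by a multiple of the box width.\<close>

section \<open>The inequality\<close>

lemma disj_le_of_nonneg_combination:
  fixes f g h p q r c :: real
  assumes "0 \<le> p" "0 \<le> q" "0 \<le> r" "0 < p + q + r"
    and "p * (f - c) + q * (g - c) + r * (h - c) \<le> 0"
  shows "f \<le> c \<or> g \<le> c \<or> h \<le> c"
proof (rule ccontr)
  assume "\<not> ?thesis"
  then have "0 < f - c" "0 < g - c" "0 < h - c" by auto
  then have "0 \<le> p * (f - c)" "0 \<le> q * (g - c)" "0 \<le> r * (h - c)"
    and "0 < p * (f - c) \<or> 0 < q * (g - c) \<or> 0 < r * (h - c)"
    using assms(1-4) by (auto intro: mult_pos_pos simp: less_le)
  with assms(5) show False by linarith
qed

lemma convex_sq_le_max:
  fixes P Q z :: real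
  assumes "0 \<le> P" "0 \<le> Q" "0 \<le> z" "z \<le> 1"
  shows "P * z^2 + Q * (1 - z)^2 \<le> max P Q"
proof -
  have "P * z^2 + Q * (1 - z)^2 \<le> max P Q * (z^2 + (1 - z)^2)"
    using mult_right_mono[of P "max P Q" "z^2"] mult_right_mono[of Q "max P Q" "(1-z)^2"]
    by (simp add: algebra_simps)
  also have "\<dots> \<le> max P Q"
  proof (rule mult_left_le)
    have "z^2 + (1 - z)^2 = 1 - 2 * (z * (1 - z))" by (simp add: power2_eq_square algebra_simps)
    then show "z^2 + (1 - z)^2 \<le> 1" using assms(3,4) by simp
  qed (use assms(1) in auto)
  finally show ?thesis .
qed

lemma tilted_sq_le:
  fixes h y :: real
  assumes "h \<le> y" "y \<le> 1"
  shows "(1 + h) * (1 - y)^2 + (1 - h) * y^2 \<le> 1 - h"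
proof -
  have "(1 + h) * (1 - y)^2 + (1 - h) * y^2 = (1 - h) + 2 * ((y - h) * (y - 1))" by algebra
  moreover have "(y - h) * (y - 1) \<le> 0" using assms by (simp add: mult_nonneg_nonpos)
  ultimately show ?thesis by linarith
qed

lemma quadratic_nonpos_of_discriminant:
  fixes A B C x :: real
  assumes "0 < A" "B^2 + 4 * A * C \<le> 0"
  shows "- A * x^2 + B * x + C \<le> 0"
proof -
  have "4 * A * (- A * x^2 + B * x + C) = (B^2 + 4 * A * C) - (2 * A * x - B)^2"
    by (simp add: power2_eq_square algebra_simps)
  also have "\<dots> \<le> 0" using assms(2) zero_le_power2[of "2 * A * x - B"] by linarith
  finally show ?thesis using assms(1) by (simp add: mult_le_0_iff)
qed

lemma large_edge_sum_le:
  fixes \<alpha> \<beta> \<gamma> :: real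
  assumes "2 \<le> \<alpha>" "1/2 \<le> \<beta>" "1/2 \<le> \<gamma>" "\<alpha> * \<beta> * \<gamma> = 1"
  shows "\<alpha>/4 + \<beta> + \<gamma> \<le> 2"
proof -
  have prod: "\<alpha> * (\<beta> * \<gamma>) = 1" using assms(4) by (simp add: mult.assoc)
  have "\<alpha> * (1/4) \<le> \<alpha> * (\<beta> * \<gamma>)"
    using mult_mono[OF assms(2,3)] assms(1-3) by (intro mult_left_mono) auto
  then have "\<alpha> \<le> 4" using prod by simp
  have "\<beta> + \<gamma> \<le> 2 * (\<beta> * \<gamma>) + 1/2"
    using mult_nonneg_nonneg[of "2*\<beta> - 1" "2*\<gamma> - 1"] assms(2,3) by (simp add: algebra_simps)
  then have "\<alpha> * (\<alpha>/4 + \<beta> + \<gamma>) \<le> \<alpha> * (\<alpha>/4 + 2 * (\<beta> * \<gamma>) + 1/2)"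
    using assms(1) by (intro mult_left_mono) auto
  also have "\<dots> = \<alpha>^2/4 + 2 + \<alpha>/2" using prod by (simp add: algebra_simps power2_eq_square)
  also have "\<dots> \<le> \<alpha> * 2"
    using mult_nonneg_nonneg[of "\<alpha> - 2" "4 - \<alpha>"] assms(1) \<open>\<alpha> \<le> 4\<close>
    by (simp add: algebra_simps power2_eq_square)
  finally show ?thesis using assms(1) by simp
qed

lemma short_side_large_edge:
  fixes \<alpha> \<beta> \<gamma> x y z :: real
  assumes "2 \<le> \<alpha>" "1/2 \<le> \<beta>" "1/2 \<le> \<gamma>" "\<alpha> * \<beta> * \<gamma> = 1"
    and "0 \<le> x" "x \<le> 1" "0 \<le> y" "y \<le> 1" "0 \<le> z" "z \<le> 1"
  shows "\<alpha>*x^2 + \<beta>*(1-y)^2 + \<gamma> \<le> 2 \<or> \<alpha> + \<beta>*y^2 + \<gamma>*z^2 \<le> 2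
    \<or> \<alpha>*(1-x)^2 + \<beta> + \<gamma>*(1-z)^2 \<le> 2"
proof (rule disj_le_of_nonneg_combination[where p = "1 - x" and q = 0 and r = x])
  have "(1 - x) * (\<alpha>*x^2 + \<beta>*(1-y)^2 + \<gamma> - 2) + x * (\<alpha>*(1-x)^2 + \<beta> + \<gamma>*(1-z)^2 - 2)
      = \<alpha> * (x * (1 - x)) + (1 - x) * \<beta> * (1-y)^2 + (1 - x) * \<gamma> + x * \<beta> + x * \<gamma> * (1-z)^2 - 2"
    by (simp add: power2_eq_square algebra_simps)
  also have "\<dots> \<le> \<alpha> * (1/4) + (1 - x) * \<beta> + (1 - x) * \<gamma> + x * \<beta> + x * \<gamma> - 2"
  proof -
    have "x * (1 - x) \<le> 1/4" using zero_le_power2[of "x - 1/2"] by (simp add: power2_eq_square algebra_simps)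
    moreover have "(1-y)^2 \<le> 1" "(1-z)^2 \<le> 1" using assms(7-10) by (simp_all add: power_le_one)
    ultimately show ?thesis using assms by (intro add_mono mult_left_mono diff_mono order_refl mult_left_le) auto
  qed
  also have "\<dots> \<le> 0" using large_edge_sum_le[OF assms(1-4)] by (simp add: algebra_simps)
  finally show "(1 - x) * (\<alpha>*x^2 + \<beta>*(1-y)^2 + \<gamma> - 2) + 0 * (\<alpha> + \<beta>*y^2 + \<gamma>*z^2 - 2)
      + x * (\<alpha>*(1-x)^2 + \<beta> + \<gamma>*(1-z)^2 - 2) \<le> 0" by simp
qed (use assms in auto)

lemma edge_sum_le_of_G_nonpos:
  fixes \<alpha> \<beta> \<gamma> t :: real
  assumes "0 < \<alpha>" "\<alpha>^2 + 1 + \<alpha>*\<beta> + \<alpha>*\<gamma> - 4*\<alpha> \<le> 0"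
  shows "\<alpha> * t * (2 - t) + \<beta> + \<gamma> \<le> 2 + 2 * t"
proof -
  have "\<alpha> * (2 + 2*t - (\<alpha> * t * (2 - t) + \<beta> + \<gamma>))
      = (\<alpha> * t - \<alpha> + 1)^2 - (\<alpha>^2 + 1 + \<alpha>*\<beta> + \<alpha>*\<gamma> - 4*\<alpha>)"
    by (simp add: power2_eq_square algebra_simps)
  also have "\<dots> \<ge> 0" using assms(2) zero_le_power2[of "\<alpha> * t - \<alpha> + 1"] by linarith
  finally show ?thesis using assms(1) by (simp add: zero_le_mult_iff)
qed

lemma short_side_G_nonpos:
  fixes \<alpha> \<beta> \<gamma> x y z :: real
  assumes "0 < \<alpha>" "0 \<le> \<beta>" "0 \<le> \<gamma>" "\<alpha>^2 + 1 + \<alpha>*\<beta> + \<alpha>*\<gamma> - 4*\<alpha> \<le> 0"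
    and x: "0 \<le> x" "x \<le> 1" and y: "0 \<le> y" "y \<le> 1" and z: "0 \<le> z" "z \<le> 1"
  shows "\<alpha>*x^2 + \<beta>*(1-y)^2 + \<gamma> \<le> 2 \<or> \<alpha> + \<beta>*y^2 + \<gamma>*z^2 \<le> 2
    \<or> \<alpha>*(1-x)^2 + \<beta> + \<gamma>*(1-z)^2 \<le> 2"
proof (cases "x \<le> 1/2")
  case True
  have "(1 - x) * (\<alpha>*x^2 + \<beta>*(1-y)^2 + \<gamma> - 2) + x * (\<alpha> + \<beta>*y^2 + \<gamma>*z^2 - 2)
      + x * (\<alpha>*(1-x)^2 + \<beta> + \<gamma>*(1-z)^2 - 2) \<le> 0" (is "?S \<le> 0")
  proof -
    have "\<beta> * (x*y^2 + (1-x)*(1-y)^2) \<le> \<beta> * (1 - x)" "\<gamma> * (x*z^2 + x*(1-z)^2) \<le> \<gamma> * x"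
      using convex_sq_le_max[of x "1 - x" y] convex_sq_le_max[of x x z] True x y z assms(2,3)
      by (auto intro: mult_left_mono simp: max_def)
    moreover have "?S = \<alpha> * x * (2 - x) + \<beta> * (x*y^2 + (1-x)*(1-y)^2) + x * \<beta> + (1 - x) * \<gamma>
        + \<gamma> * (x*z^2 + x*(1-z)^2) - 2 * (1 + x)"
      by (simp add: power2_eq_square algebra_simps)
    ultimately have "?S \<le> \<alpha> * x * (2 - x) + \<beta> * (1 - x) + x * \<beta> + (1 - x) * \<gamma> + \<gamma> * x - 2 * (1 + x)"
      by linarith
    also have "\<dots> = \<alpha> * x * (2 - x) + \<beta> + \<gamma> - (2 + 2 * x)" by (simp add: algebra_simps)
    finally show ?thesis using edge_sum_le_of_G_nonpos[OF assms(1,4), of x] by linarith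
  qed
  then show ?thesis by (rule disj_le_of_nonneg_combination[rotated 4]) (use x in auto)
next
  case False
  have "(1 - x) * (\<alpha>*x^2 + \<beta>*(1-y)^2 + \<gamma> - 2) + (1 - x) * (\<alpha> + \<beta>*y^2 + \<gamma>*z^2 - 2)
      + x * (\<alpha>*(1-x)^2 + \<beta> + \<gamma>*(1-z)^2 - 2) \<le> 0" (is "?S \<le> 0")
  proof -
    have "\<beta> * ((1-x)*y^2 + (1-x)*(1-y)^2) \<le> \<beta> * (1 - x)" "\<gamma> * ((1-x)*z^2 + x*(1-z)^2) \<le> \<gamma> * x"
      using convex_sq_le_max[of "1 - x" "1 - x" y] convex_sq_le_max[of "1 - x" x z] False x y z assms(2,3)
      by (auto intro: mult_left_mono simp: max_def)
    moreover have "?S = \<alpha> * (1 - x) * (2 - (1 - x)) + \<beta> * ((1-x)*y^2 + (1-x)*(1-y)^2) + x * \<beta>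
        + (1 - x) * \<gamma> + \<gamma> * ((1-x)*z^2 + x*(1-z)^2) - 2 * (2 - x)"
      by (simp add: power2_eq_square algebra_simps)
    ultimately have "?S \<le> \<alpha> * (1 - x) * (2 - (1 - x)) + \<beta> * (1 - x) + x * \<beta> + (1 - x) * \<gamma>
        + \<gamma> * x - 2 * (2 - x)"
      by linarith
    also have "\<dots> = \<alpha> * (1 - x) * (2 - (1 - x)) + \<beta> + \<gamma> - (2 + 2 * (1 - x))"
      by (simp add: algebra_simps)
    finally show ?thesis using edge_sum_le_of_G_nonpos[OF assms(1,4), of "1 - x"] by linarith
  qed
  then show ?thesis by (rule disj_le_of_nonneg_combination[rotated 4]) (use x in auto)
qed

lemma short_side_of_discriminants:
  fixes \<alpha> \<beta> \<gamma> h x y z :: real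
  assumes "0 < \<alpha>" "0 \<le> \<beta>" "0 \<le> \<gamma>" "0 \<le> h" "h \<le> y" "y \<le> 1"
    and x: "0 \<le> x" "x \<le> 1" and z: "0 \<le> z" "z \<le> 1"
    and disc_P: "(2*(h*(\<alpha>+\<beta>-1) + 1 - \<gamma>))^2 + 4*(\<alpha>*(1+h))*((\<alpha>+\<beta>)*(1-h) + 2*\<gamma> - 4) \<le> 0"
    and disc_Q: "(2*(h*(\<alpha>+\<beta>-1) + 1))^2 + 4*(\<alpha>*(1+h))*((\<alpha>+\<beta>)*(1-h) + \<gamma>*(1+h) - 4) \<le> 0"
  shows "\<alpha>*x^2 + \<beta>*(1-y)^2 + \<gamma> \<le> 2 \<or> \<alpha> + \<beta>*y^2 + \<gamma>*z^2 \<le> 2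
    \<or> \<alpha>*(1-x)^2 + \<beta> + \<gamma>*(1-z)^2 \<le> 2"
proof -
  define P Q where "P = (1-x)*(1-h)" and "Q = x*(1+h)"
  have "h \<le> 1" using assms(5,6) by linarith
  have "(1-x)*(1+h) * (\<alpha>*x^2 + \<beta>*(1-y)^2 + \<gamma> - 2) + (1-x)*(1-h) * (\<alpha> + \<beta>*y^2 + \<gamma>*z^2 - 2)
      + x*(1+h) * (\<alpha>*(1-x)^2 + \<beta> + \<gamma>*(1-z)^2 - 2)
    = \<alpha>*(1+h)*x*(1-x) + \<alpha>*(1-x)*(1-h) + (1-x)*(1+h)*\<gamma> + x*(1+h)*\<beta>
      + \<beta>*(1-x)*((1+h)*(1-y)^2 + (1-h)*y^2) + \<gamma>*(P*z^2 + Q*(1-z)^2) - 2*(2 - x + x*h)"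
    (is "?S = _")
    by (simp add: P_def Q_def power2_eq_square algebra_simps)
  also have "\<dots> \<le> \<alpha>*(1+h)*x*(1-x) + \<alpha>*(1-x)*(1-h) + (1-x)*(1+h)*\<gamma> + x*(1+h)*\<beta>
      + \<beta>*(1-x)*(1-h) + \<gamma>*max P Q - 2*(2 - x + x*h)"
    (is "_ \<le> ?T")
    using mult_left_mono[OF tilted_sq_le[OF assms(5,6)], of "\<beta>*(1-x)"] assms(2-4) x z \<open>h \<le> 1\<close>
      mult_left_mono[OF convex_sq_le_max[of P Q z], of \<gamma>]
    by (simp add: P_def Q_def)
  also have "\<dots> \<le> 0"
  proof (cases "Q \<le> P")
    case True
    then have "?T = - (\<alpha>*(1+h))*x^2 + (2*(h*(\<alpha>+\<beta>-1) + 1 - \<gamma>))*x + ((\<alpha>+\<beta>)*(1-h) + 2*\<gamma> - 4)"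
      by (simp add: P_def power2_eq_square algebra_simps)
    also have "\<dots> \<le> 0" using quadratic_nonpos_of_discriminant disc_P assms(1,4) by simp
    finally show ?thesis .
  next
    case False
    then have "?T = - (\<alpha>*(1+h))*x^2 + (2*(h*(\<alpha>+\<beta>-1) + 1))*x + ((\<alpha>+\<beta>)*(1-h) + \<gamma>*(1+h) - 4)"
      by (simp add: Q_def power2_eq_square algebra_simps)
    also have "\<dots> \<le> 0" using quadratic_nonpos_of_discriminant disc_Q assms(1,4) by simp
    finally show ?thesis .
  qed
  finally have "?S \<le> 0" .
  then show ?thesis
  proof (rule disj_le_of_nonneg_combination[rotated 4])
    show "0 \<le> (1-x)*(1+h)" "0 \<le> (1-x)*(1-h)" "0 \<le> x*(1+h)" using x assms(4) \<open>h \<le> 1\<close> by simp_all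
    have "0 \<le> x*h" using x assms(4) by simp
    then show "0 < (1-x)*(1+h) + (1-x)*(1-h) + x*(1+h)" using x by (simp add: algebra_simps)
  qed
qed

text \<open>In the remaining case \<open>a = 1/\<alpha> - 2/3\<close> and \<open>b = \<gamma> - 1/2\<close> lie in this box; note
\<open>2/3 + 199/3000 = 733/1000\<close>.\<close>

lemma small_box_monomial_le:
  fixes a b :: real
  assumes "0 \<le> b" "b \<le> 14/25*a" "a \<le> 199/3000" "i + j = Suc k"
  shows "a^i * b^j \<le> (14/25)^j * (199/3000)^k * a"
proof -
  have a: "0 \<le> a" using assms by linarith
  have "a^i * b^j \<le> a^i * (14/25*a)^j"
    using assms a by (intro mult_left_mono power_mono) auto
  also have "\<dots> = (14/25)^j * a^(i + j)"
    by (simp only: power_mult_distrib power_add mult_ac)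
  also have "\<dots> = (14/25)^j * (a * a^k)"
    by (simp only: assms(4) power_Suc)
  also have "\<dots> \<le> (14/25)^j * (a * (199/3000)^k)"
    using assms a by (intro mult_left_mono power_mono) auto
  finally show ?thesis by (simp add: mult_ac)
qed

lemma hard_case_w_lower:
  fixes w \<gamma> :: real
  assumes "1/2 \<le> \<gamma>" "\<gamma> \<le> 1" "1/2 < w" and G: "0 < \<gamma> + w^2*\<gamma> + w^2 + w*\<gamma>^2 - 4*w*\<gamma>"
  shows "2/3 \<le> w"
proof (rule ccontr)
  assume "\<not> 2/3 \<le> w"
  have "\<gamma> + w^2*\<gamma> + w^2 + w*\<gamma>^2 - 4*w*\<gamma>
      = - (w*(2*\<gamma> - 1)*(2*w - \<gamma>))/2 - 3*(\<gamma>*(w - 1/2)*(2/3 - w))"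
    by algebra
  moreover have "0 \<le> w*(2*\<gamma> - 1)*(2*w - \<gamma>)" using assms(1-3) by simp
  moreover have "0 \<le> \<gamma>*(w - 1/2)*(2/3 - w)" using assms(1,3) \<open>\<not> 2/3 \<le> w\<close> by simp
  ultimately show False using G by linarith
qed

lemma hard_case_w_upper:
  fixes w \<gamma> :: real
  assumes "0 \<le> \<gamma>" "\<gamma> \<le> 1" "0 \<le> w" "w \<le> 1" "w^2 \<le> \<gamma>"
    and G: "0 < \<gamma> + w^2*\<gamma> + w^2 + w*\<gamma>^2 - 4*w*\<gamma>"
  shows "w \<le> 733/1000"
proof (rule ccontr)
  assume "\<not> w \<le> 733/1000"
  have "\<gamma> + w^2*\<gamma> + w^2 + w*\<gamma>^2 - 4*w*\<gamma>
      = - ((\<gamma> - w^2)*(1 - \<gamma>*w)) - \<gamma>*(1 - w)*(w^2 + 2*w - 2)"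
    by algebra
  moreover have "\<gamma>*w \<le> 1" using assms(1-4) mult_mono[of \<gamma> 1 w 1] by simp
  then have "0 \<le> (\<gamma> - w^2)*(1 - \<gamma>*w)" using assms(5) by simp
  moreover have "(733/1000)^2 \<le> w^2" using \<open>\<not> w \<le> 733/1000\<close> by (intro power_mono) auto
  then have "0 \<le> w^2 + 2*w - 2" using \<open>\<not> w \<le> 733/1000\<close> by (simp add: power2_eq_square)
  then have "0 \<le> \<gamma>*(1 - w)*(w^2 + 2*w - 2)" using assms(1,4) by simp
  ultimately show False using G by linarith
qed

lemma hard_case_gamma_upper:
  fixes w \<gamma> :: real
  assumes "0 \<le> \<gamma>" "2/3 \<le> w" "w \<le> 733/1000" "\<gamma>^2 \<le> w"
    and G: "0 < \<gamma> + w^2*\<gamma> + w^2 + w*\<gamma>^2 - 4*w*\<gamma>"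
  shows "\<gamma> - 1/2 \<le> 14/25*(w - 2/3)"
proof (rule ccontr)
  define r where "r = 1/2 + 14/25*(w - 2/3)"
  assume "\<not> \<gamma> - 1/2 \<le> 14/25*(w - 2/3)"
  then have "r < \<gamma>" unfolding r_def by linarith
  have "r + w^2*r + w^2 + r^2*w - 4*w*r \<le> 0"
  proof -
    define a where "a = w - 2/3"
    have "0 \<le> (0::real)" "0 \<le> 14/25*a" "a \<le> 199/3000" using assms(2,3) by (simp_all add: a_def)
    note m = small_box_monomial_le[OF this]
    have "r + w^2*r + w^2 + r^2*w - 4*w*r = -11/180*a + 2909/3750*a^2 + 546/625*a^3"
      unfolding r_def a_def by algebra
    moreover have "a^2 \<le> 199/3000*a" using m[of 2 0 1] by simp
    moreover have "a^3 \<le> 39601/9000000*a" using m[of 3 0 2] by (simp add: eval_nat_numeral)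
    moreover have "0 \<le> a" using assms(2) by (simp add: a_def)
    ultimately show ?thesis by linarith
  qed
  then have "\<gamma>*(r + w^2*r + w^2 + r^2*w - 4*w*r) \<le> 0" using assms(1) by (simp add: mult_nonneg_nonpos)
  moreover have "\<gamma>*r \<le> \<gamma>*\<gamma>" using \<open>r < \<gamma>\<close> assms(1) by (intro mult_left_mono) auto
  then have "w*(\<gamma> - r)*(\<gamma>*r - w) \<le> 0"
    using \<open>r < \<gamma>\<close> assms(2,4) by (simp add: mult_nonneg_nonpos power2_eq_square)
  moreover have "r * (\<gamma> + w^2*\<gamma> + w^2 + w*\<gamma>^2 - 4*w*\<gamma>)
      = w*(\<gamma> - r)*(\<gamma>*r - w) + \<gamma>*(r + w^2*r + w^2 + r^2*w - 4*w*r)"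
    unfolding r_def by algebra
  moreover have "0 < r" using assms(2) by (simp add: r_def field_simps)
  then have "0 < r * (\<gamma> + w^2*\<gamma> + w^2 + w*\<gamma>^2 - 4*w*\<gamma>)" using G by simp
  ultimately show False by linarith
qed

lemma sorted_product_one_bounds:
  fixes \<alpha> \<beta> \<gamma> :: real
  assumes "\<beta> \<le> \<alpha>" "\<gamma> \<le> \<beta>" "0 < \<gamma>" "\<alpha> * \<beta> * \<gamma> = 1"
  shows "1 \<le> \<alpha>" "\<gamma> \<le> 1"
proof -
  show "1 \<le> \<alpha>"
  proof (rule ccontr)
    assume "\<not> 1 \<le> \<alpha>"
    then have "\<alpha> * \<beta> < 1 * 1" using assms(1-3) by (intro mult_strict_mono) auto
    then have "\<alpha> * \<beta> * \<gamma> < 1 * 1" using \<open>\<not> 1 \<le> \<alpha>\<close> assms(1-3) by (intro mult_strict_mono) auto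
    with assms(4) show False by simp
  qed
  show "\<gamma> \<le> 1"
  proof (rule ccontr)
    assume "\<not> \<gamma> \<le> 1"
    then have "1 * 1 < \<alpha> * \<beta>" using assms(1,2) by (intro mult_strict_mono) auto
    then have "1 * 1 < \<alpha> * \<beta> * \<gamma>" using \<open>\<not> \<gamma> \<le> 1\<close> by (intro mult_strict_mono) auto
    with assms(4) show False by simp
  qed
qed

lemma sorted_hard_case_box:
  fixes \<alpha> \<beta> \<gamma> :: real
  assumes "\<beta> \<le> \<alpha>" "\<gamma> \<le> \<beta>" "1/2 \<le> \<gamma>" "\<alpha> * \<beta> * \<gamma> = 1" "\<alpha> < 2"
    and "0 < \<alpha>^2 + 1 + \<alpha>*\<beta> + \<alpha>*\<gamma> - 4*\<alpha>"
  shows "2/3 \<le> 1/\<alpha>" "1/\<alpha> \<le> 733/1000" "\<gamma> - 1/2 \<le> 14/25*(1/\<alpha> - 2/3)"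
proof -
  have "0 < \<gamma>" "0 < \<alpha>" using assms(1-3) by linarith+
  note bounds = sorted_product_one_bounds[OF assms(1,2) \<open>0 < \<gamma>\<close> assms(4)]
  define w where "w = 1/\<alpha>"
  have \<alpha>w: "\<alpha> * w = 1" and "0 < w" using \<open>0 < \<alpha>\<close> by (simp_all add: w_def)
  have \<beta>\<gamma>: "\<beta> * \<gamma> = w" using assms(4) \<alpha>w \<open>0 < \<alpha>\<close> by algebra
  have "1/2 < w" "w \<le> 1" using assms(5) bounds(1) by (simp_all add: w_def field_simps)
  have "\<gamma>^2 \<le> w" using mult_right_mono[OF assms(2), of \<gamma>] \<open>0 < \<gamma>\<close> \<beta>\<gamma> by (simp add: power2_eq_square)
  have "w^2 = w * \<beta> * \<gamma>" using \<beta>\<gamma> by (simp add: power2_eq_square mult.assoc)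
  also have "\<dots> \<le> w * \<alpha> * \<gamma>" using assms(1) \<open>0 < w\<close> \<open>0 < \<gamma>\<close> by simp
  also have "\<dots> = \<gamma>" using \<alpha>w by (simp add: mult.commute)
  finally have "w^2 \<le> \<gamma>" .
  have "\<gamma> + w^2*\<gamma> + w^2 + w*\<gamma>^2 - 4*w*\<gamma>
      = w^2 * \<gamma> * (\<alpha>^2 + 1 + \<alpha>*\<beta> + \<alpha>*\<gamma> - 4*\<alpha>)"
    using \<alpha>w \<beta>\<gamma> by algebra
  then have G: "0 < \<gamma> + w^2*\<gamma> + w^2 + w*\<gamma>^2 - 4*w*\<gamma>"
    using assms(6) \<open>0 < \<gamma>\<close> \<open>0 < w\<close> by simp
  have "2/3 \<le> w" using hard_case_w_lower[OF assms(3) bounds(2) \<open>1/2 < w\<close> G] .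
  moreover have "w \<le> 733/1000"
    using hard_case_w_upper[OF _ bounds(2) _ \<open>w \<le> 1\<close> \<open>w^2 \<le> \<gamma>\<close> G] \<open>0 < \<gamma>\<close> \<open>0 < w\<close> by simp
  moreover have "\<gamma> - 1/2 \<le> 14/25*(w - 2/3)"
    using hard_case_gamma_upper[OF _ \<open>2/3 \<le> w\<close> \<open>w \<le> 733/1000\<close> \<open>\<gamma>^2 \<le> w\<close> G] \<open>0 < \<gamma>\<close> by simp
  ultimately show "2/3 \<le> 1/\<alpha>" "1/\<alpha> \<le> 733/1000" "\<gamma> - 1/2 \<le> 14/25*(1/\<alpha> - 2/3)"
    by (simp_all only: w_def)
qed

text \<open>The next two polynomials are \<open>(a + 2/3)\<^sup>4 (b + 1/2)\<^sup>2\<close> times the two discriminants in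
\<open>short_side_of_discriminants\<close> (the identity is in \<open>hard_case_discriminants\<close>). Their negative
linear part dominates, since every monomial of higher degree is at most a tiny multiple of \<open>a\<close>.\<close>

lemma hard_case_poly_P_nonpos:
  fixes a b :: real
  assumes "0 \<le> b" "b \<le> 14/25*a" "a \<le> 199/3000"
  shows "160/243*b + 3664/729*b^2 + 64/243*b^3 + (-704/81)*b^4 + (-64/27)*a + (-712/81)*a*b
      + 3680/81*a*b^2 + 3040/81*a*b^3 + (-1024/27)*a*b^4 + (-67/9)*a^2 + (-2368/27)*a^2*b
      + 260/3*a^2*b^2 + 2608/27*a^2*b^3 + (-160/3)*a^2*b^4 + 59/3*a^3 + (-178)*a^3*b
      + 3700/27*a^3*b^2 + 296/9*a^3*b^3 + (-64/3)*a^3*b^4 + 265/4*a^4 + (-620/3)*a^4*b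
      + 634/3*a^4*b^2 + (-160/3)*a^4*b^3 + 4*a^4*b^4 + 66*a^5 + (-188)*a^5*b + 120*a^5*b^2
      + (-16)*a^5*b^3 + 36*a^6 + (-48)*a^6*b + 16*a^6*b^2 \<le> 0"
proof -
  note m = small_box_monomial_le[OF assms]
  have "0 \<le> a" using assms by linarith
  then have "0 \<le> b^4" "0 \<le> a*b" "0 \<le> a*b^4" "0 \<le> a^2" "0 \<le> a^2*b"
    "0 \<le> a^2*b^4" "0 \<le> a^3*b" "0 \<le> a^3*b^4" "0 \<le> a^4*b" "0 \<le> a^4*b^3"
    "0 \<le> a^5*b" "0 \<le> a^5*b^3" "0 \<le> a^6*b"
    using assms(1) by simp_all
  moreover have "b^2 \<le> 9751/468750*a" using m[of 0 2 1] by (simp add: eval_nat_numeral)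
  moreover have "b^3 \<le> 13583143/17578125000*a" using m[of 0 3 2] by (simp add: eval_nat_numeral)
  moreover have "a*b^2 \<le> 1940449/1406250000*a" using m[of 1 2 2] by (simp add: eval_nat_numeral)
  moreover have "a*b^3 \<le> 2703045457/52734375000000*a" using m[of 1 3 3] by (simp add: eval_nat_numeral)
  moreover have "a^2*b^2 \<le> 386149351/4218750000000*a" using m[of 2 2 3] by (simp add: eval_nat_numeral)
  moreover have "a^2*b^3 \<le> 537906045943/158203125000000000*a" using m[of 2 3 4] by (simp add: eval_nat_numeral)
  moreover have "a^3 \<le> 39601/9000000*a" using m[of 3 0 2] by (simp add: eval_nat_numeral)
  moreover have "a^3*b^2 \<le> 76843720849/12656250000000000*a" using m[of 3 2 4] by (simp add: eval_nat_numeral)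
  moreover have "a^3*b^3 \<le> 107043303142657/474609375000000000000*a" using m[of 3 3 5] by (simp add: eval_nat_numeral)
  moreover have "a^4 \<le> 7880599/27000000000*a" using m[of 4 0 3] by (simp add: eval_nat_numeral)
  moreover have "a^4*b^2 \<le> 15291900448951/37968750000000000000*a" using m[of 4 2 5] by (simp add: eval_nat_numeral)
  moreover have "a^4*b^4 \<le> 29673152934266518999/53393554687500000000000000000*a" using m[of 4 4 7] by (simp add: eval_nat_numeral)
  moreover have "a^5 \<le> 1568239201/81000000000000*a" using m[of 5 0 4] by (simp add: eval_nat_numeral)
  moreover have "a^5*b^2 \<le> 3043088189341249/113906250000000000000000*a" using m[of 5 2 6] by (simp add: eval_nat_numeral)
  moreover have "a^6 \<le> 312079600999/243000000000000000*a" using m[of 6 0 5] by (simp add: eval_nat_numeral)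
  moreover have "a^6*b^2 \<le> 605574549678908551/341718750000000000000000000*a" using m[of 6 2 7] by (simp add: eval_nat_numeral)
  ultimately show ?thesis using \<open>0 \<le> a\<close> assms by linarith
qed

lemma hard_case_poly_Q_nonpos:
  fixes a b :: real
  assumes "0 \<le> b" "b \<le> 14/25*a" "a \<le> 199/3000"
  shows "(-40/243)*b + 1264/729*b^2 + (-448/243)*b^3 + (-320/81)*b^4 + 128/27*b^5 + (-14/27)*a
      + (-68/9)*a*b + 640/27*a*b^2 + 32/81*a*b^3 + (-928/27)*a*b^4 + 64/3*a*b^5 + 11/3*a^2
      + (-496/9)*a^2*b + 1936/27*a^2*b^2 + 248/27*a^2*b^3 + (-208/3)*a^2*b^4 + 32*a^2*b^5
      + 116/3*a^3 + (-1060/9)*a^3*b + 3886/27*a^3*b^2 + (-452/9)*a^3*b^3 + (-88/3)*a^3*b^4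
      + 16*a^3*b^5 + 80*a^4 + (-168)*a^4*b + 204*a^4*b^2 + (-320/3)*a^4*b^3 + 16*a^4*b^4 + 72*a^5
      + (-168)*a^5*b + 128*a^5*b^2 + (-32)*a^5*b^3 + 36*a^6 + (-48)*a^6*b + 16*a^6*b^2 \<le> 0"
proof -
  note m = small_box_monomial_le[OF assms]
  have "0 \<le> a" using assms by linarith
  then have "0 \<le> b^3" "0 \<le> b^4" "0 \<le> a*b" "0 \<le> a*b^4" "0 \<le> a^2*b"
    "0 \<le> a^2*b^4" "0 \<le> a^3*b" "0 \<le> a^3*b^3" "0 \<le> a^3*b^4" "0 \<le> a^4*b"
    "0 \<le> a^4*b^3" "0 \<le> a^5*b" "0 \<le> a^5*b^3" "0 \<le> a^6*b"
    using assms(1) by simp_all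
  moreover have "b^2 \<le> 9751/468750*a" using m[of 0 2 1] by (simp add: eval_nat_numeral)
  moreover have "b^5 \<le> 26357396251207/24719238281250000000*a" using m[of 0 5 4] by (simp add: eval_nat_numeral)
  moreover have "a*b^2 \<le> 1940449/1406250000*a" using m[of 1 2 2] by (simp add: eval_nat_numeral)
  moreover have "a*b^3 \<le> 2703045457/52734375000000*a" using m[of 1 3 3] by (simp add: eval_nat_numeral)
  moreover have "a*b^5 \<le> 5245121853990193/74157714843750000000000*a" using m[of 1 5 5] by (simp add: eval_nat_numeral)
  moreover have "a^2 \<le> 199/3000*a" using m[of 2 0 1] by (simp add: eval_nat_numeral)
  moreover have "a^2*b^2 \<le> 386149351/4218750000000*a" using m[of 2 2 3] by (simp add: eval_nat_numeral)
  moreover have "a^2*b^3 \<le> 537906045943/158203125000000000*a" using m[of 2 3 4] by (simp add: eval_nat_numeral)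
  moreover have "a^2*b^5 \<le> 1043779248944048407/222473144531250000000000000*a" using m[of 2 5 6] by (simp add: eval_nat_numeral)
  moreover have "a^3 \<le> 39601/9000000*a" using m[of 3 0 2] by (simp add: eval_nat_numeral)
  moreover have "a^3*b^2 \<le> 76843720849/12656250000000000*a" using m[of 3 2 4] by (simp add: eval_nat_numeral)
  moreover have "a^3*b^5 \<le> 207712070539865632993/667419433593750000000000000000*a" using m[of 3 5 7] by (simp add: eval_nat_numeral)
  moreover have "a^4 \<le> 7880599/27000000000*a" using m[of 4 0 3] by (simp add: eval_nat_numeral)
  moreover have "a^4*b^2 \<le> 15291900448951/37968750000000000000*a" using m[of 4 2 5] by (simp add: eval_nat_numeral)
  moreover have "a^4*b^4 \<le> 29673152934266518999/53393554687500000000000000000*a" using m[of 4 4 7] by (simp add: eval_nat_numeral)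
  moreover have "a^5 \<le> 1568239201/81000000000000*a" using m[of 5 0 4] by (simp add: eval_nat_numeral)
  moreover have "a^5*b^2 \<le> 3043088189341249/113906250000000000000000*a" using m[of 5 2 6] by (simp add: eval_nat_numeral)
  moreover have "a^6 \<le> 312079600999/243000000000000000*a" using m[of 6 0 5] by (simp add: eval_nat_numeral)
  moreover have "a^6*b^2 \<le> 605574549678908551/341718750000000000000000000*a" using m[of 6 2 7] by (simp add: eval_nat_numeral)
  ultimately show ?thesis using \<open>0 \<le> a\<close> assms by linarith
qed

lemma hard_case_h_bounds:
  fixes \<alpha> \<beta> \<gamma> a b :: real
  assumes "\<alpha> * \<beta> * \<gamma> = 1" "\<alpha> * (a + 2/3) = 1" "\<gamma> = b + 1/2"
    and "0 \<le> b" "b \<le> 14/25*a" "a \<le> 199/3000"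
  shows "0 \<le> 2 - \<alpha> - \<gamma>" "4 * \<beta> * (2 - \<alpha> - \<gamma>) \<le> 1"
proof -
  have "0 \<le> a" using assms(4,5) by linarith
  have "a * b \<le> 14/25 * (199/3000) * a"
    using small_box_monomial_le[OF assms(4-6), of 1 1 1] by simp
  moreover have "0 \<le> a * b" using \<open>0 \<le> a\<close> assms(4) by simp
  ultimately have k: "0 \<le> 3/2*a - a*b - 2/3*b" "6*a - 4*(a*b) - 8/3*b \<le> \<gamma>"
    using \<open>0 \<le> a\<close> assms(3-6) by linarith+
  have "(a + 2/3) * (2 - \<alpha> - \<gamma>) = 3/2*a - a*b - 2/3*b" using assms(2,3) by algebra
  with k(1) have "0 \<le> (a + 2/3) * (2 - \<alpha> - \<gamma>)" by simp
  then show "0 \<le> 2 - \<alpha> - \<gamma>" using \<open>0 \<le> a\<close> by (simp add: zero_le_mult_iff)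
  have "\<gamma> * (4 * \<beta> * (2 - \<alpha> - \<gamma>)) = 6*a - 4*(a*b) - 8/3*b" using assms(1-3) by algebra
  with k(2) have "\<gamma> * (4 * \<beta> * (2 - \<alpha> - \<gamma>)) \<le> \<gamma> * 1" by simp
  then show "4 * \<beta> * (2 - \<alpha> - \<gamma>) \<le> 1" using assms(3,4) by (simp add: mult_le_cancel_left)
qed

lemma hard_case_discriminants:
  fixes \<alpha> \<beta> \<gamma> a b :: real
  assumes "\<alpha> * \<beta> * \<gamma> = 1" "\<alpha> * (a + 2/3) = 1" "\<gamma> = b + 1/2"
    and box: "0 \<le> b" "b \<le> 14/25*a" "a \<le> 199/3000"
  defines "h \<equiv> 2 * (2 - \<alpha> - \<gamma>)"
  shows "(2*(h*(\<alpha>+\<beta>-1) + 1 - \<gamma>))^2 + 4*(\<alpha>*(1+h))*((\<alpha>+\<beta>)*(1-h) + 2*\<gamma> - 4) \<le> 0"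
    and "(2*(h*(\<alpha>+\<beta>-1) + 1))^2 + 4*(\<alpha>*(1+h))*((\<alpha>+\<beta>)*(1-h) + \<gamma>*(1+h) - 4) \<le> 0"
proof -
  have pos: "0 < (a + 2/3)^4 * \<gamma>^2" using box assms(3) by simp
  have "(a + 2/3)^4 * \<gamma>^2
      * ((2*(h*(\<alpha>+\<beta>-1) + 1 - \<gamma>))^2 + 4*(\<alpha>*(1+h))*((\<alpha>+\<beta>)*(1-h) + 2*\<gamma> - 4))
    = 160/243*b + 3664/729*b^2 + 64/243*b^3 + (-704/81)*b^4 + (-64/27)*a + (-712/81)*a*b
        + 3680/81*a*b^2 + 3040/81*a*b^3 + (-1024/27)*a*b^4 + (-67/9)*a^2 + (-2368/27)*a^2*b
        + 260/3*a^2*b^2 + 2608/27*a^2*b^3 + (-160/3)*a^2*b^4 + 59/3*a^3 + (-178)*a^3*b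
        + 3700/27*a^3*b^2 + 296/9*a^3*b^3 + (-64/3)*a^3*b^4 + 265/4*a^4 + (-620/3)*a^4*b
        + 634/3*a^4*b^2 + (-160/3)*a^4*b^3 + 4*a^4*b^4 + 66*a^5 + (-188)*a^5*b + 120*a^5*b^2
        + (-16)*a^5*b^3 + 36*a^6 + (-48)*a^6*b + 16*a^6*b^2"
    using assms(1-3) h_def by algebra
  also have "\<dots> \<le> 0" using hard_case_poly_P_nonpos[OF box] .
  finally show "(2*(h*(\<alpha>+\<beta>-1) + 1 - \<gamma>))^2 + 4*(\<alpha>*(1+h))*((\<alpha>+\<beta>)*(1-h) + 2*\<gamma> - 4) \<le> 0"
    using pos by (metis mult_le_cancel_left_pos mult_zero_right)
  have "(a + 2/3)^4 * \<gamma>^2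
      * ((2*(h*(\<alpha>+\<beta>-1) + 1))^2 + 4*(\<alpha>*(1+h))*((\<alpha>+\<beta>)*(1-h) + \<gamma>*(1+h) - 4))
    = (-40/243)*b + 1264/729*b^2 + (-448/243)*b^3 + (-320/81)*b^4 + 128/27*b^5 + (-14/27)*a
        + (-68/9)*a*b + 640/27*a*b^2 + 32/81*a*b^3 + (-928/27)*a*b^4 + 64/3*a*b^5 + 11/3*a^2
        + (-496/9)*a^2*b + 1936/27*a^2*b^2 + 248/27*a^2*b^3 + (-208/3)*a^2*b^4 + 32*a^2*b^5
        + 116/3*a^3 + (-1060/9)*a^3*b + 3886/27*a^3*b^2 + (-452/9)*a^3*b^3 + (-88/3)*a^3*b^4
        + 16*a^3*b^5 + 80*a^4 + (-168)*a^4*b + 204*a^4*b^2 + (-320/3)*a^4*b^3 + 16*a^4*b^4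
        + 72*a^5 + (-168)*a^5*b + 128*a^5*b^2 + (-32)*a^5*b^3 + 36*a^6 + (-48)*a^6*b + 16*a^6*b^2"
    using assms(1-3) h_def by algebra
  also have "\<dots> \<le> 0" using hard_case_poly_Q_nonpos[OF box] .
  finally show "(2*(h*(\<alpha>+\<beta>-1) + 1))^2 + 4*(\<alpha>*(1+h))*((\<alpha>+\<beta>)*(1-h) + \<gamma>*(1+h) - 4) \<le> 0"
    using pos by (metis mult_le_cancel_left_pos mult_zero_right)
qed

lemma short_side_hard_case:
  fixes \<alpha> \<beta> \<gamma> x y z :: real
  assumes "\<beta> \<le> \<alpha>" "\<gamma> \<le> \<beta>" "1/2 \<le> \<gamma>" "\<alpha> * \<beta> * \<gamma> = 1" "\<alpha> < 2"
    and "0 < \<alpha>^2 + 1 + \<alpha>*\<beta> + \<alpha>*\<gamma> - 4*\<alpha>"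
    and x: "0 \<le> x" "x \<le> 1" and y: "0 \<le> y" "y \<le> 1" and z: "0 \<le> z" "z \<le> 1"
  shows "\<alpha>*x^2 + \<beta>*(1-y)^2 + \<gamma> \<le> 2 \<or> \<alpha> + \<beta>*y^2 + \<gamma>*z^2 \<le> 2
    \<or> \<alpha>*(1-x)^2 + \<beta> + \<gamma>*(1-z)^2 \<le> 2"
proof -
  have "0 < \<gamma>" "0 < \<beta>" "0 < \<alpha>" using assms(1-3) by linarith+
  define a b h where "a = 1/\<alpha> - 2/3" and "b = \<gamma> - 1/2" and "h = 2 * (2 - \<alpha> - \<gamma>)"
  have "\<alpha> * (a + 2/3) = 1" "\<gamma> = b + 1/2" using \<open>0 < \<alpha>\<close> by (simp_all add: a_def b_def)
  moreover have "0 \<le> b" "b \<le> 14/25*a" "a \<le> 199/3000"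
    using sorted_hard_case_box[OF assms(1-6)] assms(3) by (simp_all add: a_def b_def)
  ultimately have d: "0 \<le> 2 - \<alpha> - \<gamma>" "4 * \<beta> * (2 - \<alpha> - \<gamma>) \<le> 1"
    and disc: "(2*(h*(\<alpha>+\<beta>-1) + 1 - \<gamma>))^2 + 4*(\<alpha>*(1+h))*((\<alpha>+\<beta>)*(1-h) + 2*\<gamma> - 4) \<le> 0"
      "(2*(h*(\<alpha>+\<beta>-1) + 1))^2 + 4*(\<alpha>*(1+h))*((\<alpha>+\<beta>)*(1-h) + \<gamma>*(1+h) - 4) \<le> 0"
    using hard_case_h_bounds[OF assms(4)] hard_case_discriminants[OF assms(4), folded h_def]
    by blast+
  show ?thesis
  proof (cases "\<alpha> + \<beta>*y^2 + \<gamma>*z^2 \<le> 2")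
    case False
    have "\<beta> * h^2 = (4 * \<beta> * (2 - \<alpha> - \<gamma>)) * (2 - \<alpha> - \<gamma>)"
      by (simp add: h_def power2_eq_square algebra_simps)
    also have "\<dots> \<le> 2 - \<alpha> - \<gamma>" using mult_right_mono[OF d(2,1)] by simp
    also have "\<dots> < \<beta> * y^2"
    proof -
      have "\<gamma> * z^2 \<le> \<gamma> * 1" using z \<open>0 < \<gamma>\<close> by (intro mult_left_mono) (auto simp: power_le_one)
      with False show ?thesis by linarith
    qed
    finally have "h \<le> y" using \<open>0 < \<beta>\<close> y by (simp add: power_less_imp_less_base less_imp_le)
    moreover have "0 \<le> h" using d(1) by (simp add: h_def)
    ultimately show ?thesis
      using short_side_of_discriminants[OF \<open>0 < \<alpha>\<close> _ _ _ _ y(2) x z disc] \<open>0 < \<beta>\<close> \<open>0 < \<gamma>\<close> by simp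
  qed simp
qed

lemma short_side_sorted:
  fixes \<alpha> \<beta> \<gamma> x y z :: real
  assumes "\<beta> \<le> \<alpha>" "\<gamma> \<le> \<beta>" "1/2 \<le> \<gamma>" "\<alpha> * \<beta> * \<gamma> = 1"
    and xyz: "0 \<le> x" "x \<le> 1" "0 \<le> y" "y \<le> 1" "0 \<le> z" "z \<le> 1"
  shows "\<alpha>*x^2 + \<beta>*(1-y)^2 + \<gamma> \<le> 2 \<or> \<alpha> + \<beta>*y^2 + \<gamma>*z^2 \<le> 2
    \<or> \<alpha>*(1-x)^2 + \<beta> + \<gamma>*(1-z)^2 \<le> 2"
proof -
  have "1/2 \<le> \<beta>" "0 < \<alpha>" using assms(1-3) by linarith+
  consider "2 \<le> \<alpha>" | "\<alpha> < 2" "\<alpha>^2 + 1 + \<alpha>*\<beta> + \<alpha>*\<gamma> - 4*\<alpha> \<le> 0"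
    | "\<alpha> < 2" "0 < \<alpha>^2 + 1 + \<alpha>*\<beta> + \<alpha>*\<gamma> - 4*\<alpha>"
    by linarith
  then show ?thesis
  proof cases
    case 1
    show ?thesis using short_side_large_edge[OF 1 \<open>1/2 \<le> \<beta>\<close> assms(3,4) xyz] .
  next
    case 2
    show ?thesis using short_side_G_nonpos[OF \<open>0 < \<alpha>\<close> _ _ 2(2) xyz] assms(3) \<open>1/2 \<le> \<beta>\<close> by simp
  next
    case 3
    show ?thesis using short_side_hard_case[OF assms(1-4) 3 xyz] .
  qed
qed

lemma short_side:
  fixes \<alpha> \<beta> \<gamma> x y z :: real
  assumes "1/2 \<le> \<alpha>" "1/2 \<le> \<beta>" "1/2 \<le> \<gamma>" "\<alpha> * \<beta> * \<gamma> = 1"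
    and x: "0 \<le> x" "x \<le> 1" and y: "0 \<le> y" "y \<le> 1" and z: "0 \<le> z" "z \<le> 1"
  shows "\<alpha>*x^2 + \<beta>*(1-y)^2 + \<gamma> \<le> 2 \<or> \<alpha> + \<beta>*y^2 + \<gamma>*z^2 \<le> 2
    \<or> \<alpha>*(1-x)^2 + \<beta> + \<gamma>*(1-z)^2 \<le> 2"
proof -
  have x': "0 \<le> 1-x" "1-x \<le> 1" and y': "0 \<le> 1-y" "1-y \<le> 1" and z': "0 \<le> 1-z" "1-z \<le> 1"
    using x y z by auto
  consider "\<beta> \<le> \<alpha>" "\<gamma> \<le> \<beta>" | "\<gamma> \<le> \<alpha>" "\<beta> \<le> \<gamma>" | "\<alpha> \<le> \<beta>" "\<gamma> \<le> \<alpha>"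
    | "\<alpha> \<le> \<gamma>" "\<gamma> \<le> \<beta>" | "\<alpha> \<le> \<gamma>" "\<beta> \<le> \<alpha>" | "\<beta> \<le> \<gamma>" "\<alpha> \<le> \<beta>"
    by linarith
  then show ?thesis
  proof cases
    case 1
    then show ?thesis using short_side_sorted[OF _ _ assms(3,4) x y z] by blast
  next
    case 2
    have "\<alpha> * \<gamma> * \<beta> = 1" using assms(4) by (simp add: mult_ac)
    from short_side_sorted[OF 2 assms(2) this x' z y] show ?thesis by (auto simp: algebra_simps)
  next
    case 3
    have "\<beta> * \<alpha> * \<gamma> = 1" using assms(4) by (simp add: mult_ac)
    from short_side_sorted[OF 3 assms(3) this y' x' z'] show ?thesis by (auto simp: algebra_simps)
  next
    case 4
    have "\<beta> * \<gamma> * \<alpha> = 1" using assms(4) by (simp add: mult_ac)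
    from short_side_sorted[OF 4(2,1) assms(1) this y z' x'] show ?thesis by (auto simp: algebra_simps)
  next
    case 5
    have "\<gamma> * \<alpha> * \<beta> = 1" using assms(4) by (simp add: mult_ac)
    from short_side_sorted[OF 5 assms(2) this z' x y'] show ?thesis by (auto simp: algebra_simps)
  next
    case 6
    have "\<gamma> * \<beta> * \<alpha> = 1" using assms(4) by (simp add: mult_ac)
    from short_side_sorted[OF 6 assms(1) this z y' x] show ?thesis by (auto simp: algebra_simps)
  qed
qed

section \<open>Squared sides of a triangle on skew edges\<close>

lemma brick_point_dist_sq:
  assumes "brick_data p u a"
  shows "(dist (brick_point p u a t) (brick_point p u a t'))^2
    = ((t 1 - t' 1) * a 1)^2 + ((t 2 - t' 2) * a 2)^2 + ((t 3 - t' 3) * a 3)^2"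
proof -
  from assms have o: "u 1 \<bullet> u 1 = 1" "u 2 \<bullet> u 2 = 1" "u 3 \<bullet> u 3 = 1" "u 1 \<bullet> u 2 = 0" "u 1 \<bullet> u 3 = 0"
    "u 2 \<bullet> u 1 = 0" "u 2 \<bullet> u 3 = 0" "u 3 \<bullet> u 1 = 0" "u 3 \<bullet> u 2 = 0"
    unfolding brick_data_def by auto
  define d1 d2 d3 where "d1 = (t 1 - t' 1) * a 1" and "d2 = (t 2 - t' 2) * a 2"
    and "d3 = (t 3 - t' 3) * a 3"
  have "brick_point p u a t - brick_point p u a t' = d1 *\<^sub>R u 1 + d2 *\<^sub>R u 2 + d3 *\<^sub>R u 3"
    unfolding brick_point_def d1_def d2_def d3_def by (simp add: algebra_simps scaleR_diff_left)
  then have "(dist (brick_point p u a t) (brick_point p u a t'))^2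
      = (d1 *\<^sub>R u 1 + d2 *\<^sub>R u 2 + d3 *\<^sub>R u 3) \<bullet> (d1 *\<^sub>R u 1 + d2 *\<^sub>R u 2 + d3 *\<^sub>R u 3)"
    by (simp add: dist_norm power2_norm_eq_inner)
  also have "\<dots> = d1^2 + d2^2 + d3^2"
    using o by (simp add: inner_add_left inner_add_right power2_eq_square)
  finally show ?thesis by (simp add: d1_def d2_def d3_def)
qed

lemma brick_edge_memE:
  assumes "P \<in> brick_edge p u a i c"
  obtains t where "P = brick_point p u a t" "0 \<le> t i" "t i \<le> 1" "\<forall>j\<in>{1,2,3}-{i}. t j = c j"
  using assms unfolding brick_edge_def by blast

lemma brick_edges_meet:
  assumes "{i, j, k} = {1, 2, 3}" "i \<noteq> j" "i \<noteq> k" "j \<noteq> k"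
    and "c' i \<in> {0, 1}" "c j \<in> {0, 1}" "c k = c' k"
  shows "brick_edge p u a i c \<inter> brick_edge p u a j c' \<noteq> {}"
proof -
  define t where "t l = (if l = i then c' i else if l = j then c j else c k)" for l
  have "t l = c l" if "l \<in> {1,2,3} - {i}" for l
  proof -
    have "l = j \<or> l = k" using that assms(1) by blast
    then show ?thesis using assms(2-4) by (auto simp: t_def)
  qed
  moreover have "t l = c' l" if "l \<in> {1,2,3} - {j}" for l
  proof -
    have "l = i \<or> l = k" using that assms(1) by blast
    then show ?thesis using assms(2-4,7) by (auto simp: t_def)
  qed
  moreover have "0 \<le> t i" "t i \<le> 1" "0 \<le> t j" "t j \<le> 1" using assms(2,5,6) by (auto simp: t_def)
  ultimately have "brick_point p u a t \<in> brick_edge p u a i c \<inter> brick_edge p u a j c'"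
    unfolding brick_edge_def by blast
  then show ?thesis by blast
qed

lemma skew_edge_triple_offsets:
  assumes "skew_edge_triple p u a E1 E2 E3"
  obtains c1 c2 c3 where "E1 = brick_edge p u a 1 c1" "E2 = brick_edge p u a 2 c2"
      "E3 = brick_edge p u a 3 c3"
    and "c1 2 \<in> {0, 1}" "c1 3 \<in> {0, 1}" "c2 1 \<in> {0, 1}" "c2 3 \<in> {0, 1}"
      "c3 1 \<in> {0, 1}" "c3 2 \<in> {0, 1}"
    and "c1 3 \<noteq> c2 3" "c2 1 \<noteq> c3 1" "c1 2 \<noteq> c3 2"
proof -
  from assms obtain c1 c2 c3 where E: "E1 = brick_edge p u a 1 c1" "E2 = brick_edge p u a 2 c2"
      "E3 = brick_edge p u a 3 c3"
    and c: "\<forall>j\<in>{1,2,3}-{1}. c1 j = 0 \<or> c1 j = 1" "\<forall>j\<in>{1,2,3}-{2}. c2 j = 0 \<or> c2 j = 1"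
      "\<forall>j\<in>{1,2,3}-{3}. c3 j = 0 \<or> c3 j = 1"
    and disjoint: "E1 \<inter> E2 = {}" "E2 \<inter> E3 = {}" "E1 \<inter> E3 = {}"
    unfolding skew_edge_triple_def is_brick_edge_def by blast
  have bin: "c1 2 \<in> {0, 1}" "c1 3 \<in> {0, 1}" "c2 1 \<in> {0, 1}" "c2 3 \<in> {0, 1}"
      "c3 1 \<in> {0, 1}" "c3 2 \<in> {0, 1}"
    using c by auto
  have "c1 3 \<noteq> c2 3" using brick_edges_meet[of 1 2 3 c2 c1 p u a] disjoint(1) E bin by auto
  moreover have "c2 1 \<noteq> c3 1"
    using brick_edges_meet[of 2 3 1 c3 c2 p u a] disjoint(2) E bin by (auto simp: insert_commute)
  moreover have "c1 2 \<noteq> c3 2"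
    using brick_edges_meet[of 1 3 2 c3 c1 p u a] disjoint(3) E bin by (auto simp: insert_commute)
  ultimately show ?thesis using that E bin by blast
qed

lemma binary_offsets:
  fixes c c' X :: real
  assumes "c \<in> {0, 1}" "c' \<in> {0, 1}" "c \<noteq> c'" "0 \<le> X" "X \<le> 1"
  obtains x where "0 \<le> x" "x \<le> 1" "(X - c)^2 = x^2" "(c' - X)^2 = (1 - x)^2" "(c - c')^2 = 1"
proof (cases "c = 0")
  case True
  then show ?thesis using that[of X] assms by (simp add: power2_commute)
next
  case False
  then show ?thesis using that[of "1 - X"] assms by (simp add: power2_commute)
qed

lemma skew_triangle_sides_sq:
  assumes "brick_data p u a" "skew_edge_triple p u a E1 E2 E3" "A \<in> E1" "B \<in> E2" "C \<in> E3"
  obtains x y z :: real where "0 \<le> x" "x \<le> 1" "0 \<le> y" "y \<le> 1" "0 \<le> z" "z \<le> 1"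
    "(dist A B)^2 = (a 1)^2 * x^2 + (a 2)^2 * (1 - y)^2 + (a 3)^2"
    "(dist B C)^2 = (a 1)^2 + (a 2)^2 * y^2 + (a 3)^2 * z^2"
    "(dist C A)^2 = (a 1)^2 * (1 - x)^2 + (a 2)^2 + (a 3)^2 * (1 - z)^2"
proof -
  obtain c1 c2 c3 where E: "E1 = brick_edge p u a 1 c1" "E2 = brick_edge p u a 2 c2"
      "E3 = brick_edge p u a 3 c3"
    and bin: "c1 2 \<in> {0, 1}" "c1 3 \<in> {0, 1}" "c2 1 \<in> {0, 1}" "c2 3 \<in> {0, 1}"
      "c3 1 \<in> {0, 1}" "c3 2 \<in> {0, 1}"
    and ne: "c1 3 \<noteq> c2 3" "c2 1 \<noteq> c3 1" "c1 2 \<noteq> c3 2"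
    using skew_edge_triple_offsets[OF assms(2)] by blast
  obtain r where A: "A = brick_point p u a r" "0 \<le> r 1" "r 1 \<le> 1"
    and "\<forall>j\<in>{1,2,3}-{1}. r j = c1 j"
    using brick_edge_memE[OF assms(3)[unfolded E]] .
  then have rc: "r 2 = c1 2" "r 3 = c1 3" by auto
  obtain s where B: "B = brick_point p u a s" "0 \<le> s 2" "s 2 \<le> 1"
    and "\<forall>j\<in>{1,2,3}-{2}. s j = c2 j"
    using brick_edge_memE[OF assms(4)[unfolded E]] .
  then have sc: "s 1 = c2 1" "s 3 = c2 3" by auto
  obtain t where C: "C = brick_point p u a t" "0 \<le> t 3" "t 3 \<le> 1"
    and "\<forall>j\<in>{1,2,3}-{3}. t j = c3 j"
    using brick_edge_memE[OF assms(5)[unfolded E]] .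
  then have tc: "t 1 = c3 1" "t 2 = c3 2" by auto
  obtain x where x: "0 \<le> x" "x \<le> 1" "(r 1 - c2 1)^2 = x^2" "(c3 1 - r 1)^2 = (1 - x)^2"
      "(c2 1 - c3 1)^2 = 1"
    using binary_offsets[OF bin(3,5) ne(2) A(2,3)] .
  obtain y where y: "0 \<le> y" "y \<le> 1" "(s 2 - c3 2)^2 = y^2" "(c1 2 - s 2)^2 = (1 - y)^2"
      "(c3 2 - c1 2)^2 = 1"
    using binary_offsets[OF bin(6,1) ne(3)[symmetric] B(2,3)] .
  obtain z where z: "0 \<le> z" "z \<le> 1" "(t 3 - c2 3)^2 = z^2" "(c1 3 - t 3)^2 = (1 - z)^2"
      "(c2 3 - c1 3)^2 = 1"
    using binary_offsets[OF bin(4,2) ne(1)[symmetric] C(2,3)] .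
  have "(dist A B)^2 = (a 1)^2 * x^2 + (a 2)^2 * (1 - y)^2 + (a 3)^2"
    using brick_point_dist_sq[OF assms(1), of r s] A B rc sc x y z
    by (simp add: power_mult_distrib power2_commute[of "c1 3"])
  moreover have "(dist B C)^2 = (a 1)^2 + (a 2)^2 * y^2 + (a 3)^2 * z^2"
    using brick_point_dist_sq[OF assms(1), of s t] B C sc tc x y z
    by (simp add: power_mult_distrib power2_commute[of "c2 3"])
  moreover have "(dist C A)^2 = (a 1)^2 * (1 - x)^2 + (a 2)^2 + (a 3)^2 * (1 - z)^2"
    using brick_point_dist_sq[OF assms(1), of t r] A C rc tc x y z
    by (simp add: power_mult_distrib power2_commute[of "t 3"])
  ultimately show ?thesis using that x(1,2) y(1,2) z(1,2) by blast
qed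

theorem mainTheorem1:
  fixes p :: "real^3" and u :: "nat \<Rightarrow> real^3" and a :: "nat \<Rightarrow> real"
    and E1 E2 E3 :: "(real^3) set" and A B C :: "real^3"
  assumes "brick_data p u a"
    and "a 1 * a 2 * a 3 = 1"
    and "\<forall>i\<in>{1,2,3}. a i \<ge> 1 / sqrt 2"
    and "skew_edge_triple p u a E1 E2 E3"
    and "A \<in> E1" and "B \<in> E2" and "C \<in> E3"
    and "\<not> collinear {A, B, C}"
  shows "dist A B \<le> sqrt 2 \<or> dist B C \<le> sqrt 2 \<or> dist C A \<le> sqrt 2"
proof -
  obtain x y z where xyz: "0 \<le> x" "x \<le> 1" "0 \<le> y" "y \<le> 1" "0 \<le> z" "z \<le> 1"
    and sides: "(dist A B)^2 = (a 1)^2 * x^2 + (a 2)^2 * (1 - y)^2 + (a 3)^2"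
      "(dist B C)^2 = (a 1)^2 + (a 2)^2 * y^2 + (a 3)^2 * z^2"
      "(dist C A)^2 = (a 1)^2 * (1 - x)^2 + (a 2)^2 + (a 3)^2 * (1 - z)^2"
    using skew_triangle_sides_sq[OF assms(1,4-7)] .
  have "1/2 \<le> (a i)^2" if "i \<in> {1,2,3}" for i
  proof -
    have "(1 / sqrt 2)^2 \<le> (a i)^2" using assms(3) that by (intro power_mono) auto
    then show ?thesis by (simp add: power_divide)
  qed
  moreover have "(a 1)^2 * (a 2)^2 * (a 3)^2 = 1" using assms(2) by (metis power_mult_distrib power_one)
  ultimately have "(dist A B)^2 \<le> 2 \<or> (dist B C)^2 \<le> 2 \<or> (dist C A)^2 \<le> 2"
    unfolding sides by (intro short_side xyz) auto
  then show ?thesis by (auto intro: real_le_rsqrt)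
qed

end
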